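(* Let $b,\beta_{vh},\beta_{hv},m,\tau_h,\tau_v,\mu_v,\tau_1,\tau_2>0$ and consider the distributed-delay system $$\dot E(t)=b\beta_{vh}mI_v(t)\Big(1-E(t)-\int_{t-\tau_1-\tau_2}^t\tfrac1{\tau_h}E(s)\,ds\Big)-\tfrac1{\tau_h}E(t),$$ $$\dot E_v(t)=b\beta_{hv}\int_{t-\tau_1}^t\tfrac1{\tau_h}E(s)\,ds\,\big(1-E_v(t)-I_v(t)\big)-\Big(\tfrac1{\tau_v}+\mu_v\Big)E_v(t),\qquad \dot I_v(t)=\tfrac1{\tau_v}E_v(t)-\mu_vI_v(t).$$ Let $$\mathcal R_0=\frac{b^2\beta_{vh}\beta_{hv}m\tau_1}{\mu_v(\mu_v\tau_v+1)}.$$ Then there exists an endemic equilibrium $(E^*,E_v^*,I_v^* )\in(0,1)^3$ (a constant stationary solution, with $E\equiv E^*$) of this system if and only if $\mathcal R_0>1$. In that case $$E^*=\frac{\mu_v\tau_h(\mathcal R_0-1)}{\mu_v\mathcal R_0(\tau_1+\tau_2+\tau_h)+b\beta_{hv}\tau_1},\quad E_v^*=\frac{\mu_v\tau_v(\mathcal R_0-1)}{\mathcal R_0(1+\mu_v\tau_v)+b\beta_{vh}m(\tau_1+\tau_2+\tau_h)},$$ $$I_v^*=\frac{\mathcal R_0-1}{\mathcal R_0(1+\mu_v\tau_v)+b\beta_{vh}m(\tau_1+\tau_2+\tau_h)}.$$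
   Context: This is the "uniform host response" reduction of a structured host–vector model: $E$ is the exposed host proportion, $E_v,I_v$ are the exposed and infected vector proportions, $\tau_1$ is the host infectious period, $\tau_2$ the recovery period, $\tau_h,\tau_v$ the intrinsic and extrinsic incubation periods, $b$ the biting rate, $\beta_{vh},\beta_{hv}$ transmission probabilities, $\mu_v$ the vector death rate and $m$ the vector-to-host ratio. Data are $E(t)$ on $[-\tau_1-\tau_2,0]$ and $E_v(0),I_v(0)$. *)

theory Defs
  imports "HOL-Analysis.Analysis"
begin

definition rhs_E :: "real \<Rightarrow> real \<Rightarrow> real \<Rightarrow> real \<Rightarrow> real \<Rightarrow> real \<Rightarrow>
    (real \<Rightarrow> real) \<Rightarrow> (real \<Rightarrow> real) \<Rightarrow> real \<Rightarrow> real" where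
  "rhs_E b bvh m tau_h tau1 tau2 E Iv t =
     b * bvh * m * Iv t * (1 - E t - integral {t - tau1 - tau2..t} (\<lambda>s. (1 / tau_h) * E s))
     - (1 / tau_h) * E t"

definition rhs_Ev :: "real \<Rightarrow> real \<Rightarrow> real \<Rightarrow> real \<Rightarrow> real \<Rightarrow> real \<Rightarrow>
    (real \<Rightarrow> real) \<Rightarrow> (real \<Rightarrow> real) \<Rightarrow> (real \<Rightarrow> real) \<Rightarrow> real \<Rightarrow> real" where
  "rhs_Ev b bhv tau_h tau_v mu_v tau1 E Ev Iv t =
     b * bhv * integral {t - tau1..t} (\<lambda>s. (1 / tau_h) * E s) * (1 - Ev t - Iv t)
     - (1 / tau_v + mu_v) * Ev t"

definition rhs_Iv :: "real \<Rightarrow> real \<Rightarrow> (real \<Rightarrow> real) \<Rightarrow> (real \<Rightarrow> real) \<Rightarrow> real \<Rightarrow> real" where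
  "rhs_Iv tau_v mu_v Ev Iv t = (1 / tau_v) * Ev t - mu_v * Iv t"

definition is_solution :: "real \<Rightarrow> real \<Rightarrow> real \<Rightarrow> real \<Rightarrow> real \<Rightarrow> real \<Rightarrow> real \<Rightarrow> real \<Rightarrow> real \<Rightarrow>
    (real \<Rightarrow> real) \<Rightarrow> (real \<Rightarrow> real) \<Rightarrow> (real \<Rightarrow> real) \<Rightarrow> bool" where
  "is_solution b bvh bhv m tau_h tau_v mu_v tau1 tau2 E Ev Iv \<longleftrightarrow>
     (\<forall>t. (E has_real_derivative rhs_E b bvh m tau_h tau1 tau2 E Iv t) (at t) \<and>
          (Ev has_real_derivative rhs_Ev b bhv tau_h tau_v mu_v tau1 E Ev Iv t) (at t) \<and>
          (Iv has_real_derivative rhs_Iv tau_v mu_v Ev Iv t) (at t))"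

definition is_equilibrium :: "real \<Rightarrow> real \<Rightarrow> real \<Rightarrow> real \<Rightarrow> real \<Rightarrow> real \<Rightarrow> real \<Rightarrow> real \<Rightarrow> real \<Rightarrow>
    real \<Rightarrow> real \<Rightarrow> real \<Rightarrow> bool" where
  "is_equilibrium b bvh bhv m tau_h tau_v mu_v tau1 tau2 Es Evs Ivs \<longleftrightarrow>
     is_solution b bvh bhv m tau_h tau_v mu_v tau1 tau2 (\<lambda>_. Es) (\<lambda>_. Evs) (\<lambda>_. Ivs)"

definition R0 :: "real \<Rightarrow> real \<Rightarrow> real \<Rightarrow> real \<Rightarrow> real \<Rightarrow> real \<Rightarrow> real \<Rightarrow> real" where
  "R0 b bvh bhv m tau_v mu_v tau1 = (b^2 * bvh * bhv * m * tau1) / (mu_v * (mu_v * tau_v + 1))"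

end

theory Submission
  imports Defs
begin

text \<open>At a constant state the delay integrals collapse to \<open>(\<tau>\<^sub>1 + \<tau>\<^sub>2) E\<^sup>* / \<tau>\<^sub>h\<close> and
  \<open>\<tau>\<^sub>1 E\<^sup>* / \<tau>\<^sub>h\<close>, so the equilibria are the solutions of three polynomial equations. The \<open>I\<^sub>v\<close>
  equation gives \<open>E\<^sub>v\<^sup>* = \<mu>\<^sub>v \<tau>\<^sub>v I\<^sub>v\<^sup>*\<close>, the \<open>E\<close> equation expresses \<open>E\<^sup>*\<close> through \<open>I\<^sub>v\<^sup>*\<close>, and
  substituting both into the \<open>E\<^sub>v\<close> equation and cancelling \<open>I\<^sub>v\<^sup>* > 0\<close> leaves the linear relation
  \<open>R\<^sub>0 (1 - (1 + \<mu>\<^sub>v \<tau>\<^sub>v) I\<^sub>v\<^sup>*) = 1 + b \<beta>\<^sub>v\<^sub>h m (\<tau>\<^sub>1 + \<tau>\<^sub>2 + \<tau>\<^sub>h) I\<^sub>v\<^sup>*\<close>. Its right-hand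
  side exceeds 1 while the bracket on the left is below 1, which forces \<open>R\<^sub>0 > 1\<close>; solving it
  gives the closed forms, and for \<open>R\<^sub>0 > 1\<close> these lie in \<open>(0, 1)\<close>.\<close>

lemma has_real_derivative_const_iff:
  "((\<lambda>_. c) has_real_derivative D) (at x) \<longleftrightarrow> D = 0"
  using DERIV_const DERIV_unique by metis

lemma is_equilibrium_iff:
  fixes b bvh bhv m tau_h tau_v mu_v tau1 tau2 Es Evs Ivs :: real
  assumes "tau1 \<ge> 0" "tau2 \<ge> 0" "tau_h \<noteq> 0" "tau_v \<noteq> 0"
  shows "is_equilibrium b bvh bhv m tau_h tau_v mu_v tau1 tau2 Es Evs Ivs \<longleftrightarrow>
    b * bvh * m * Ivs * (tau_h - (tau1 + tau2 + tau_h) * Es) = Es \<and>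
    b * bhv * tau1 * Es * (1 - Evs - Ivs) = (1 + mu_v * tau_v) * mu_v * tau_h * Ivs \<and>
    Evs = mu_v * tau_v * Ivs"
proof -
  have "is_equilibrium b bvh bhv m tau_h tau_v mu_v tau1 tau2 Es Evs Ivs \<longleftrightarrow>
    b * bvh * m * Ivs * (1 - Es - (tau1 + tau2) * (Es / tau_h)) = Es / tau_h \<and>
    b * bhv * (tau1 * (Es / tau_h)) * (1 - Evs - Ivs) = (1 / tau_v + mu_v) * Evs \<and>
    Evs / tau_v = mu_v * Ivs"
    using assms
    by (simp add: is_equilibrium_def is_solution_def rhs_E_def rhs_Ev_def rhs_Iv_def
        has_real_derivative_const_iff)
  moreover have "b * bvh * m * Ivs * (1 - Es - (tau1 + tau2) * (Es / tau_h)) = Es / tau_h \<longleftrightarrow>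
      b * bvh * m * Ivs * (tau_h - (tau1 + tau2 + tau_h) * Es) = Es"
    using assms by (simp add: field_simps)
  moreover have "Evs / tau_v = mu_v * Ivs \<longleftrightarrow> Evs = mu_v * tau_v * Ivs"
    using assms by (auto simp: field_simps)
  moreover have "b * bhv * (tau1 * (Es / tau_h)) * (1 - Evs - Ivs) = (1 + mu_v * tau_v) * mu_v * Ivs \<longleftrightarrow>
      b * bhv * tau1 * Es * (1 - Evs - Ivs) = (1 + mu_v * tau_v) * mu_v * tau_h * Ivs"
    using assms by (auto simp: field_simps)
  moreover have "(1 / tau_v + mu_v) * Evs = (1 + mu_v * tau_v) * mu_v * Ivs"
    if "Evs = mu_v * tau_v * Ivs"
    using assms that by (simp add: field_simps)
  ultimately show ?thesis by auto
qed

lemma R0_mult_denominator: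
  assumes "mu_v > 0" "tau_v \<ge> 0"
  shows "R0 b bvh bhv m tau_v mu_v tau1 * (mu_v * (1 + mu_v * tau_v)) = (b * bvh * m) * (b * bhv * tau1)"
proof -
  have "mu_v * tau_v + 1 > 0"
    using mult_nonneg_nonneg[of mu_v tau_v] assms by linarith
  then have "mu_v * (mu_v * tau_v + 1) \<noteq> 0"
    using assms by simp
  then show ?thesis
    unfolding R0_def by (simp add: power2_eq_square add.commute mult_ac)
qed

text \<open>The reduced system below uses \<open>A = b \<beta>\<^sub>v\<^sub>h m\<close>, \<open>B = b \<beta>\<^sub>h\<^sub>v \<tau>\<^sub>1\<close>, \<open>c = \<mu>\<^sub>v \<tau>\<^sub>v\<close>,
  \<open>h = \<tau>\<^sub>h\<close> and \<open>T = \<tau>\<^sub>1 + \<tau>\<^sub>2 + \<tau>\<^sub>h\<close>, so that \<open>R \<mu> (1 + c) = A B\<close> characterises \<open>R\<^sub>0\<close>.\<close>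

lemma vector_balance_iff_threshold:
  fixes A B c h T \<mu> R E I :: real
  assumes R: "R * (\<mu> * (1 + c)) = A * B"
    and E: "E * (1 + A * I * T) = A * I * h"
    and nz: "1 + A * I * T \<noteq> 0" "(1 + c) * \<mu> * h * I \<noteq> 0"
  shows "B * E * (1 - c * I - I) = (1 + c) * \<mu> * h * I \<longleftrightarrow> R * (1 - (1 + c) * I) = 1 + A * I * T"
proof -
  have "B * E * (1 - c * I - I) * (1 + A * I * T) = B * (E * (1 + A * I * T)) * (1 - (1 + c) * I)"
    by (simp add: algebra_simps)
  also have "\<dots> = (R * (\<mu> * (1 + c))) * h * I * (1 - (1 + c) * I)"
    unfolding E R by (simp only: mult_ac)
  also have "\<dots> = (1 + c) * \<mu> * h * I * (R * (1 - (1 + c) * I))"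
    by (simp only: mult_ac)
  finally have scaled: "B * E * (1 - c * I - I) * (1 + A * I * T) =
      (1 + c) * \<mu> * h * I * (R * (1 - (1 + c) * I))" .
  have "B * E * (1 - c * I - I) = (1 + c) * \<mu> * h * I \<longleftrightarrow>
        B * E * (1 - c * I - I) * (1 + A * I * T) = (1 + c) * \<mu> * h * I * (1 + A * I * T)"
    using mult_right_cancel[OF nz(1)] by simp
  also have "\<dots> \<longleftrightarrow> R * (1 - (1 + c) * I) = 1 + A * I * T"
    unfolding scaled using mult_left_cancel[OF nz(2)] .
  finally show ?thesis .
qed

lemma reduced_host_closed_form:
  fixes A B c h T \<mu> R E I :: real
  assumes R: "R * (\<mu> * (1 + c)) = A * B"
    and E: "E * (1 + A * I * T) = A * I * h"
    and I: "I * (R * (1 + c) + A * T) = R - 1"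
    and nz: "A \<noteq> 0" "\<mu> * R * T + B \<noteq> 0"
  shows "E = \<mu> * h * (R - 1) / (\<mu> * R * T + B)"
proof -
  have "A * (E * (\<mu> * R * T + B)) = \<mu> * E * (R * (1 + c) + A * T * R)"
    using R by algebra
  also have "\<dots> = \<mu> * E * (R * (1 + c) + A * T + A * T * (I * (R * (1 + c) + A * T)))"
    unfolding I by (simp add: algebra_simps)
  also have "\<dots> = \<mu> * (E * (1 + A * I * T)) * (R * (1 + c) + A * T)"
    by (simp add: algebra_simps)
  also have "\<dots> = A * (\<mu> * h * (I * (R * (1 + c) + A * T)))"
    unfolding E by (simp add: algebra_simps)
  finally have "E * (\<mu> * R * T + B) = \<mu> * h * (R - 1)"
    unfolding I using nz(1) by simp
  then show ?thesis
    using nz(2) by (simp add: eq_divide_eq)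
qed

lemma reduced_equilibrium_closed_form:
  fixes A B c h T \<mu> R E V I :: real
  assumes pos: "A > 0" "B > 0" "c \<ge> 0" "h > 0" "\<mu> > 0" "T \<ge> 0" "I > 0"
    and R: "R * (\<mu> * (1 + c)) = A * B"
    and host: "A * I * (h - T * E) = E"
    and vec: "B * E * (1 - V - I) = (1 + c) * \<mu> * h * I"
    and V: "V = c * I"
  shows "R > 1 \<and> E = \<mu> * h * (R - 1) / (\<mu> * R * T + B) \<and>
    V = c * (R - 1) / (R * (1 + c) + A * T) \<and> I = (R - 1) / (R * (1 + c) + A * T)"
proof -
  have "1 + c > 0" "A * I * T \<ge> 0" "A * T \<ge> 0"
    using pos by simp_all
  have "\<mu> * (1 + c) > 0" "0 < R * (\<mu> * (1 + c))"
    unfolding R using pos \<open>1 + c > 0\<close> by simp_all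
  then have "R > 0"
    by (rule zero_less_mult_pos2[rotated])
  have E_mult: "E * (1 + A * I * T) = A * I * h"
    using host by (simp add: algebra_simps)
  have "B * E * (1 - c * I - I) = (1 + c) * \<mu> * h * I"
    using vec unfolding V .
  moreover have "1 + A * I * T \<noteq> 0"
    using \<open>A * I * T \<ge> 0\<close> by linarith
  moreover have "(1 + c) * \<mu> * h * I \<noteq> 0"
    using \<open>1 + c > 0\<close> pos by simp
  ultimately have "R * (1 - (1 + c) * I) = 1 + A * I * T"
    using vector_balance_iff_threshold[OF R E_mult] by blast
  then have I_mult: "I * (R * (1 + c) + A * T) = R - 1"
    and R_minus_1: "R - 1 = A * I * T + R * (1 + c) * I"
    by (simp_all add: algebra_simps)
  have "R * (1 + c) * I > 0" "R * (1 + c) > 0" "\<mu> * R * T \<ge> 0"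
    using \<open>R > 0\<close> \<open>1 + c > 0\<close> pos by simp_all
  then have "R > 1" and den: "R * (1 + c) + A * T > 0" "\<mu> * R * T + B > 0"
    using R_minus_1 \<open>A * I * T \<ge> 0\<close> \<open>A * T \<ge> 0\<close> \<open>\<mu> * R * T \<ge> 0\<close> pos by linarith+
  have "I = (R - 1) / (R * (1 + c) + A * T)"
    using den(1) I_mult by (intro eq_divide_imp) simp_all
  moreover have "E = \<mu> * h * (R - 1) / (\<mu> * R * T + B)"
    using reduced_host_closed_form[OF R E_mult I_mult] pos den by simp
  ultimately show ?thesis
    using V \<open>R > 1\<close> by simp
qed

lemma reduced_equilibrium_exists:
  fixes A B c h T \<mu> R :: real
  assumes pos: "A > 0" "B > 0" "c > 0" "h > 0" "\<mu> > 0" "h < T"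
    and R: "R * (\<mu> * (1 + c)) = A * B"
    and "R > 1"
  shows "\<exists>E V I. E \<in> {0<..<1} \<and> V \<in> {0<..<1} \<and> I \<in> {0<..<1} \<and>
    A * I * (h - T * E) = E \<and> B * E * (1 - V - I) = (1 + c) * \<mu> * h * I \<and> V = c * I"
proof -
  define I where "I = (R - 1) / (R * (1 + c) + A * T)"
  define E where "E = A * I * h / (1 + A * I * T)"
  have "A * T > 0" "R * c > 0"
    using pos \<open>R > 1\<close> by simp_all
  then have den: "R * (1 + c) + A * T > 0"
    using \<open>R > 1\<close> by (simp add: algebra_simps)
  have "R * (1 + c) = R + R * c" "c * (R - 1) = R * c - c"
    by (simp_all add: algebra_simps)
  with \<open>A * T > 0\<close> \<open>R * c > 0\<close> \<open>R > 1\<close> pos(3)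
  have "R - 1 < R * (1 + c) + A * T" "c * (R - 1) < R * (1 + c) + A * T"
    by linarith+
  then have "I \<in> {0<..<1}" "c * I \<in> {0<..<1}"
    using den pos \<open>R > 1\<close> by (simp_all add: I_def)
  then have "A * I > 0"
    using pos by simp
  then have "A * I * h < A * I * T" "A * I * h > 0" "A * I * T > 0"
    using pos(4,6) by (simp_all add: mult_strict_left_mono)
  then have "A * I * h < 1 + A * I * T" "1 + A * I * T > 0"
    by linarith+
  then have E_mult: "E * (1 + A * I * T) = A * I * h" and "E \<in> {0<..<1}"
    using \<open>A * I * h > 0\<close> by (simp_all add: E_def)
  have "R * (1 - (1 + c) * I) = 1 + A * I * T"
    using den by (simp add: I_def field_simps)
  then have "B * E * (1 - c * I - I) = (1 + c) * \<mu> * h * I"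
    using vector_balance_iff_threshold[OF R E_mult] \<open>A * I * T > 0\<close> \<open>I \<in> {0<..<1}\<close> pos by simp
  moreover have "A * I * (h - T * E) = E"
    using E_mult by (simp add: algebra_simps)
  ultimately show ?thesis
    using \<open>E \<in> {0<..<1}\<close> \<open>c * I \<in> {0<..<1}\<close> \<open>I \<in> {0<..<1}\<close> by auto
qed

theorem proposition4:
  fixes b bvh bhv m tau_h tau_v mu_v tau1 tau2 :: real
  assumes "b > 0" "bvh > 0" "bhv > 0" "m > 0" "tau_h > 0" "tau_v > 0" "mu_v > 0"
    "tau1 > 0" "tau2 > 0"
  defines "R \<equiv> R0 b bvh bhv m tau_v mu_v tau1"
  shows "((\<exists>Es Evs Ivs. Es \<in> {0<..<1} \<and> Evs \<in> {0<..<1} \<and> Ivs \<in> {0<..<1} \<and>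
            is_equilibrium b bvh bhv m tau_h tau_v mu_v tau1 tau2 Es Evs Ivs) \<longleftrightarrow> R > 1) \<and>
         (\<forall>Es Evs Ivs. Es \<in> {0<..<1} \<longrightarrow> Evs \<in> {0<..<1} \<longrightarrow> Ivs \<in> {0<..<1} \<longrightarrow>
            is_equilibrium b bvh bhv m tau_h tau_v mu_v tau1 tau2 Es Evs Ivs \<longrightarrow>
            Es = mu_v * tau_h * (R - 1) / (mu_v * R * (tau1 + tau2 + tau_h) + b * bhv * tau1) \<and>
            Evs = mu_v * tau_v * (R - 1) / (R * (1 + mu_v * tau_v) + b * bvh * m * (tau1 + tau2 + tau_h)) \<and>
            Ivs = (R - 1) / (R * (1 + mu_v * tau_v) + b * bvh * m * (tau1 + tau2 + tau_h)))"
proof -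
  have R: "R * (mu_v * (1 + mu_v * tau_v)) = (b * bvh * m) * (b * bhv * tau1)"
    unfolding R_def using R0_mult_denominator assms by simp
  note equilibrium = is_equilibrium_iff[OF less_imp_le[OF assms(8)] less_imp_le[OF assms(9)]
      assms(5)[THEN less_imp_neq, THEN not_sym] assms(6)[THEN less_imp_neq, THEN not_sym]]
  have pos: "b * bvh * m > 0" "b * bhv * tau1 > 0" "mu_v * tau_v > 0"
    "tau1 + tau2 + tau_h \<ge> 0" "tau_h < tau1 + tau2 + tau_h"
    using assms by simp_all
  have closed_form: "R > 1 \<and>
      Es = mu_v * tau_h * (R - 1) / (mu_v * R * (tau1 + tau2 + tau_h) + b * bhv * tau1) \<and>
      Evs = mu_v * tau_v * (R - 1) / (R * (1 + mu_v * tau_v) + b * bvh * m * (tau1 + tau2 + tau_h)) \<and>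
      Ivs = (R - 1) / (R * (1 + mu_v * tau_v) + b * bvh * m * (tau1 + tau2 + tau_h))"
    if "Ivs \<in> {0<..<1}" "is_equilibrium b bvh bhv m tau_h tau_v mu_v tau1 tau2 Es Evs Ivs"
    for Es Evs Ivs
  proof -
    have "Ivs > 0"
      using that(1) by simp
    with that(2) show ?thesis
      unfolding equilibrium
      by (meson reduced_equilibrium_closed_form[OF pos(1,2) less_imp_le[OF pos(3)] assms(5,7) pos(4) _ R])
  qed
  have "\<exists>Es Evs Ivs. Es \<in> {0<..<1} \<and> Evs \<in> {0<..<1} \<and> Ivs \<in> {0<..<1} \<and>
      is_equilibrium b bvh bhv m tau_h tau_v mu_v tau1 tau2 Es Evs Ivs" if "R > 1"
    using reduced_equilibrium_exists[OF pos(1-3) assms(5,7) pos(5) R that]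
    unfolding equilibrium .
  with closed_form show ?thesis
    by blast
qed

end
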